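(* For any menu $M=\{(q_i,t_i)\}$ of threshold certificates offered by the certifier, in the resulting equilibrium market outcome each producer type $\psi$ trades with consumer type $\phi(\psi)$, where $F(\phi(\psi))=G(\psi)$ (as cumulative distribution functions). The quality level at which $\psi$ and $\phi(\psi)$ trade is a menu threshold $q_i$ maximizing $f(q_i;\phi(\psi))-g(q_i;\psi)-t_i$, and this level is weakly increasing in $\psi$.
   Context: Certification market. Producers have types $\psi\in\mathbb{R}_+$ distributed by an atomless probability measure $G$ with compact support; consumers have types $\phi\in\mathbb{R}_+$ distributed by an atomless probability measure $F$ with compact support. Goods have quality $q\in[0,1]$. Production cost $g(q;\psi)$ is weakly convex and non-decreasing in $q$ with $g(0;\psi)=0$; consumer value $f(q;\phi)$ is weakly concave and non-decreasing in $q$ with $f(0;\phi)=0$, $0\le f\le1$. Strict single-crossing: for all $\phi_1<\phi_2$, $q_1<q_2$: $f(q_2;\phi_2)-f(q_1;\phi_2)>f(q_2;\phi_1)-f(q_1;\phi_1)$; for all $\psi_1<\psi_2$, $q_1<q_2$: $g(q_2;\psi_2)-g(q_1;\psi_2)<g(q_2;\psi_1)-g(q_1;\psi_1)$. Utilities are quasilinear (consumer: $f(q;\phi)-p$; producer: $p-g(q;\psi)-t$ where $t$ is the transfer to the certifier). Threshold certificates: every certificate has the form $[q,1]$, identified with $q$; a menu is $M=\{(q_i,t_i)\}$, always including $(0,0)$; a producer who selects threshold $q$ produces at quality exactly $q$ and pays $t$. Producers choose certificates simultaneously (an equilibrium is a strategy $\psi\mapsto\Gamma(\psi)\in M$ from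 which no producer can profitably deviate), then goods trade in a competitive (Walrasian) market equilibrium in which each consumer buys a utility-maximizing quality level at market prices and markets clear. *)

theory Defs
  imports "HOL-Probability.Probability"
begin

definition type_distribution :: "real measure \<Rightarrow> bool" where
  "type_distribution G \<longleftrightarrow>
     prob_space G \<and> sets G = sets borel \<and>
     (\<forall>x. emeasure G {x} = 0) \<and>
     (\<exists>K. compact K \<and> K \<subseteq> {0..} \<and> emeasure G (UNIV - K) = 0)"

definition cost_fun :: "(real \<Rightarrow> real \<Rightarrow> real) \<Rightarrow> bool" where
  "cost_fun g \<longleftrightarrow>
     (\<forall>\<psi>\<ge>0. convex_on {0..1} (\<lambda>q. g q \<psi>) \<and> mono_on {0..1} (\<lambda>q. g q \<psi>) \<and> g 0 \<psi> = 0) \<and>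
     (\<forall>\<psi>1 \<psi>2 q1 q2. 0 \<le> \<psi>1 \<longrightarrow> \<psi>1 < \<psi>2 \<longrightarrow> 0 \<le> q1 \<longrightarrow> q1 < q2 \<longrightarrow> q2 \<le> 1 \<longrightarrow>
        g q2 \<psi>2 - g q1 \<psi>2 < g q2 \<psi>1 - g q1 \<psi>1)"

definition value_fun :: "(real \<Rightarrow> real \<Rightarrow> real) \<Rightarrow> bool" where
  "value_fun f \<longleftrightarrow>
     (\<forall>\<phi>\<ge>0. concave_on {0..1} (\<lambda>q. f q \<phi>) \<and> mono_on {0..1} (\<lambda>q. f q \<phi>) \<and> f 0 \<phi> = 0 \<and>
        (\<forall>q\<in>{0..1}. 0 \<le> f q \<phi> \<and> f q \<phi> \<le> 1)) \<and>
     (\<forall>\<phi>1 \<phi>2 q1 q2. 0 \<le> \<phi>1 \<longrightarrow> \<phi>1 < \<phi>2 \<longrightarrow> 0 \<le> q1 \<longrightarrow> q1 < q2 \<longrightarrow> q2 \<le> 1 \<longrightarrow>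
        f q2 \<phi>2 - f q1 \<phi>2 > f q2 \<phi>1 - f q1 \<phi>1)"

definition menu :: "(real \<times> real) set \<Rightarrow> bool" where
  "menu M \<longleftrightarrow> finite M \<and> (0, 0) \<in> M \<and> (\<forall>(q, t)\<in>M. 0 \<le> q \<and> q \<le> 1)"

text \<open>Equilibrium of the certification game followed by the competitive market:
  \<Gamma> is the producers' certificate choice, p the market price of each quality level
  (a menu threshold), D the quality level bought by each consumer type.
  (i) no producer type can profitably deviate to another certificate of the menu
      (producers are price takers),
  (ii) each consumer type buys a utility-maximizing quality level at prices p,
  (iii) the market for each quality level clears.\<close>
definition market_equilibrium ::
  "(real \<times> real) set \<Rightarrow> real measure \<Rightarrow> real measure \<Rightarrow>
   (real \<Rightarrow> real \<Rightarrow> real) \<Rightarrow> (real \<Rightarrow> real \<Rightarrow> real) \<Rightarrow>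
   (real \<Rightarrow> real \<times> real) \<Rightarrow> (real \<Rightarrow> real) \<Rightarrow> (real \<Rightarrow> real) \<Rightarrow> bool" where
  "market_equilibrium M G F f g \<Gamma> p D \<longleftrightarrow>
     (\<forall>\<psi>\<ge>0. \<Gamma> \<psi> \<in> M \<and>
        (\<forall>(q, t)\<in>M. p q - g q \<psi> - t \<le> p (fst (\<Gamma> \<psi>)) - g (fst (\<Gamma> \<psi>)) \<psi> - snd (\<Gamma> \<psi>))) \<and>
     (\<forall>\<phi>\<ge>0. D \<phi> \<in> fst ` M \<and>
        (\<forall>q\<in>fst ` M. f q \<phi> - p q \<le> f (D \<phi>) \<phi> - p (D \<phi>))) \<and>
     (\<forall>q\<in>fst ` M.
        {\<psi>. 0 \<le> \<psi> \<and> fst (\<Gamma> \<psi>) = q} \<in> sets G \<and>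
        {\<phi>. 0 \<le> \<phi> \<and> D \<phi> = q} \<in> sets F \<and>
        measure G {\<psi>. 0 \<le> \<psi> \<and> fst (\<Gamma> \<psi>) = q} = measure F {\<phi>. 0 \<le> \<phi> \<and> D \<phi> = q})"

end

theory Submission
  imports Defs
begin

text \<open>Strict single crossing makes the certificate a producer picks at market prices, and the
quality a consumer buys, weakly increasing in the type (revealed preference: adding the two
optimality inequalities of two types contradicts strictly increasing differences). Market
clearing for each of the finitely many thresholds then gives equal producer and consumer masses
below every threshold. If producer \<open>\<psi>\<close> and a consumer \<open>\<phi>\<close> of the same quantile bought different
levels, monotonicity would pin \<open>cdf G \<psi>\<close> to the producer mass below one of these thresholds;
since \<open>G\<close> is atomless, each level set of its cdf is null, so this happens only on a null set.
Once the levels agree, adding the producer's and the consumer's optimality inequalities cancels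
the price and leaves the maximisation of joint surplus over the menu.\<close>

lemma maximizer_mono_if_strict_single_crossing:
  fixes u :: "'a \<Rightarrow> real \<Rightarrow> real" and k :: "'a \<Rightarrow> real" and X :: "real \<Rightarrow> 'a"
  assumes X_in: "\<And>s. s \<in> T \<Longrightarrow> X s \<in> C"
    and X_opt: "\<And>s a. s \<in> T \<Longrightarrow> a \<in> C \<Longrightarrow> u a s \<le> u (X s) s"
    and crossing: "\<And>s1 s2 a1 a2. s1 \<in> T \<Longrightarrow> s2 \<in> T \<Longrightarrow> s1 < s2 \<Longrightarrow> a1 \<in> C \<Longrightarrow> a2 \<in> C \<Longrightarrow>
        k a1 < k a2 \<Longrightarrow> u a2 s1 - u a1 s1 < u a2 s2 - u a1 s2"
  shows "mono_on T (\<lambda>s. k (X s))"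
proof (rule mono_onI, rule ccontr)
  fix s1 s2 assume s: "s1 \<in> T" "s2 \<in> T" "s1 \<le> s2" and "\<not> k (X s1) \<le> k (X s2)"
  then have k_less: "k (X s2) < k (X s1)" by simp
  then have "s1 < s2" using s by (cases "s1 = s2") auto
  then have "u (X s1) s1 - u (X s2) s1 < u (X s1) s2 - u (X s2) s2"
    using crossing s X_in k_less by blast
  moreover have "u (X s1) s2 \<le> u (X s2) s2" "u (X s2) s1 \<le> u (X s1) s1"
    using X_opt X_in s by blast+
  ultimately show False by linarith
qed

lemma market_equilibrium_certificate_mono:
  assumes "cost_fun g" "menu M" "market_equilibrium M G F f g \<Gamma> p D"
  shows "mono_on {0..} (\<lambda>\<psi>. fst (\<Gamma> \<psi>))"
proof -
  define profit where "profit a \<psi> = p (fst a) - g (fst a) \<psi> - snd a" for a \<psi>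
  show ?thesis
  proof (rule maximizer_mono_if_strict_single_crossing[where C = M and u = profit])
    show "\<Gamma> \<psi> \<in> M" if "\<psi> \<in> {0..}" for \<psi>
      using assms(3) that by (simp add: market_equilibrium_def)
    show "profit a \<psi> \<le> profit (\<Gamma> \<psi>) \<psi>" if "\<psi> \<in> {0..}" "a \<in> M" for \<psi> a
      using assms(3) that unfolding market_equilibrium_def profit_def by (auto simp: case_prod_beta)
    show "profit a2 \<psi>1 - profit a1 \<psi>1 < profit a2 \<psi>2 - profit a1 \<psi>2"
      if "\<psi>1 \<in> {0..}" "\<psi>2 \<in> {0..}" "\<psi>1 < \<psi>2" "a1 \<in> M" "a2 \<in> M" "fst a1 < fst a2"
      for \<psi>1 \<psi>2 a1 a2
    proof -
      have "0 \<le> fst a1" "fst a2 \<le> 1"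
        using assms(2) that(4,5) unfolding menu_def by auto
      then have "g (fst a2) \<psi>2 - g (fst a1) \<psi>2 < g (fst a2) \<psi>1 - g (fst a1) \<psi>1"
        using assms(1) that(1,3,6) unfolding cost_fun_def by simp
      then show ?thesis by (simp add: profit_def)
    qed
  qed
qed

lemma market_equilibrium_demand_mono:
  assumes "value_fun f" "menu M" "market_equilibrium M G F f g \<Gamma> p D"
  shows "mono_on {0..} D"
proof (rule maximizer_mono_if_strict_single_crossing
    [where C = "fst ` M" and u = "\<lambda>q \<phi>. f q \<phi> - p q" and k = id, unfolded id_apply])
  show "D \<phi> \<in> fst ` M" if "\<phi> \<in> {0..}" for \<phi>
    using assms(3) that unfolding market_equilibrium_def by auto
  show "f q \<phi> - p q \<le> f (D \<phi>) \<phi> - p (D \<phi>)" if "\<phi> \<in> {0..}" "q \<in> fst ` M" for \<phi> q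
    using assms(3) that unfolding market_equilibrium_def by auto
  show "f q2 \<phi>1 - p q2 - (f q1 \<phi>1 - p q1) < f q2 \<phi>2 - p q2 - (f q1 \<phi>2 - p q1)"
    if "\<phi>1 \<in> {0..}" "\<phi>2 \<in> {0..}" "\<phi>1 < \<phi>2" "q1 \<in> fst ` M" "q2 \<in> fst ` M" "q1 < q2"
    for \<phi>1 \<phi>2 q1 q2
  proof -
    have "0 \<le> q1" "q2 \<le> 1"
      using assms(2) that(4,5) unfolding menu_def by auto
    then show ?thesis
      using assms(1) that(1,3,6) unfolding value_fun_def by simp
  qed
qed

lemma measure_sublevel_finite_range:
  fixes X :: "'a \<Rightarrow> 'b::linorder"
  assumes "finite_measure G" "finite Q"
    and range: "\<And>x. P x \<Longrightarrow> X x \<in> Q"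
    and levels: "\<And>q. q \<in> Q \<Longrightarrow> {x. P x \<and> X x = q} \<in> sets G"
  shows "{x. P x \<and> X x \<le> r} \<in> sets G"
    and "measure G {x. P x \<and> X x \<le> r} = (\<Sum>q\<in>{q\<in>Q. q \<le> r}. measure G {x. P x \<and> X x = q})"
proof -
  have sublevel: "{x. P x \<and> X x \<le> r} = (\<Union>q\<in>{q\<in>Q. q \<le> r}. {x. P x \<and> X x = q})"
    using range by auto
  show "{x. P x \<and> X x \<le> r} \<in> sets G"
    unfolding sublevel using assms(2) levels by (intro sets.finite_UN) auto
  show "measure G {x. P x \<and> X x \<le> r} = (\<Sum>q\<in>{q\<in>Q. q \<le> r}. measure G {x. P x \<and> X x = q})"
    unfolding sublevel using assms levels
    by (intro measure_finite_Union) (auto simp: disjoint_family_on_def finite_measure.emeasure_finite)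
qed

lemma market_equilibrium_sublevel_measure_eq:
  assumes "menu M" "market_equilibrium M G F f g \<Gamma> p D" "finite_measure G" "finite_measure F"
  shows "{\<psi>. 0 \<le> \<psi> \<and> fst (\<Gamma> \<psi>) \<le> r} \<in> sets G" "{\<phi>. 0 \<le> \<phi> \<and> D \<phi> \<le> r} \<in> sets F"
    and "measure G {\<psi>. 0 \<le> \<psi> \<and> fst (\<Gamma> \<psi>) \<le> r} = measure F {\<phi>. 0 \<le> \<phi> \<and> D \<phi> \<le> r}"
proof -
  have "finite (fst ` M)" using assms(1) by (simp add: menu_def)
  note measure_sublevel_finite_range[OF _ this, where P = "\<lambda>x. 0 \<le> x"]
  note sellers = this[OF assms(3), where X = "\<lambda>\<psi>. fst (\<Gamma> \<psi>)"]
    and buyers = this[OF assms(4), where X = D]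
  note clearing = assms(2)[unfolded market_equilibrium_def]
  show "{\<psi>. 0 \<le> \<psi> \<and> fst (\<Gamma> \<psi>) \<le> r} \<in> sets G"
    by (rule sellers(1)) (use clearing in auto)
  show "{\<phi>. 0 \<le> \<phi> \<and> D \<phi> \<le> r} \<in> sets F"
    by (rule buyers(1)) (use clearing in auto)
  have "measure G {\<psi>. 0 \<le> \<psi> \<and> fst (\<Gamma> \<psi>) \<le> r}
      = (\<Sum>q\<in>{q\<in>fst ` M. q \<le> r}. measure G {\<psi>. 0 \<le> \<psi> \<and> fst (\<Gamma> \<psi>) = q})"
    by (rule sellers(2)) (use clearing in auto)
  also have "\<dots> = (\<Sum>q\<in>{q\<in>fst ` M. q \<le> r}. measure F {\<phi>. 0 \<le> \<phi> \<and> D \<phi> = q})"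
    using clearing by (intro sum.cong) auto
  also have "\<dots> = measure F {\<phi>. 0 \<le> \<phi> \<and> D \<phi> \<le> r}"
    by (rule buyers(2)[symmetric]) (use clearing in auto)
  finally show "measure G {\<psi>. 0 \<le> \<psi> \<and> fst (\<Gamma> \<psi>) \<le> r} = measure F {\<phi>. 0 \<le> \<phi> \<and> D \<phi> \<le> r}" .
qed

lemma (in real_distribution) emeasure_compact_in_cdf_level_set:
  assumes atomless: "\<And>x. emeasure M {x} = 0"
    and "compact K" "K \<subseteq> {x. cdf M x = v}"
  shows "emeasure M K = 0"
proof (cases "K = {}")
  case False
  obtain a where a: "a \<in> K" "\<forall>y\<in>K. a \<le> y"
    using compact_attains_inf[OF \<open>compact K\<close> False] by auto
  obtain b where b: "b \<in> K" "\<forall>y\<in>K. y \<le> b"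
    using compact_attains_sup[OF \<open>compact K\<close> False] by auto
  have "emeasure M {a<..b} = 0"
  proof (cases "a < b")
    case True
    then have "measure M {a<..b} = cdf M b - cdf M a" using cdf_diff_eq by simp
    moreover have "cdf M a = v" "cdf M b = v" using a(1) b(1) assms(3) by auto
    ultimately show ?thesis by (simp add: emeasure_eq_measure)
  qed simp
  have "emeasure M K \<le> emeasure M ({a} \<union> {a<..b})"
    using a b by (intro emeasure_mono) auto
  also have "\<dots> \<le> emeasure M {a} + emeasure M {a<..b}"
    by (intro emeasure_subadditive) auto
  finally show ?thesis using atomless \<open>emeasure M {a<..b} = 0\<close> by simp
qed simp

lemma (in real_distribution) cdf_level_set_null:
  assumes atomless: "\<And>x. emeasure M {x} = 0"
  shows "{x. cdf M x = v} \<in> null_sets M"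
proof -
  have "mono (cdf M)" using cdf_nondecreasing by (auto simp: mono_def)
  then have "cdf M -` {v} \<inter> space borel \<in> sets borel"
    by (intro measurable_sets[OF borel_measurable_mono]) auto
  then have level_set: "{x. cdf M x = v} \<in> sets borel" by (simp add: vimage_def)
  have "emeasure M {x. cdf M x = v} = (SUP K \<in> {K. K \<subseteq> {x. cdf M x = v} \<and> compact K}. emeasure M K)"
    by (rule inner_regular) (auto simp: level_set)
  also have "\<dots> = 0"
    using emeasure_compact_in_cdf_level_set[OF atomless] by (intro SUP_eq_const) auto
  finally show ?thesis using level_set by (auto simp: null_sets_def)
qed

lemma type_distribution_real_distribution: "type_distribution H \<Longrightarrow> real_distribution H"
  unfolding type_distribution_def real_distribution_def real_distribution_axioms_def by auto

lemma type_distribution_support_bounded: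
  assumes "type_distribution H"
  obtains b where "b \<ge> 0" "emeasure H (UNIV - {0..b}) = 0"
proof -
  obtain K where K: "compact K" "K \<subseteq> {0..}" "emeasure H (UNIV - K) = 0"
    and sets: "sets H = sets borel"
    using assms unfolding type_distribution_def by auto
  obtain b where b: "\<forall>x\<in>K. x \<le> b"
    using compact_imp_bounded[OF K(1)] bounded_real by (metis abs_le_D1)
  have "emeasure H (UNIV - {0..max b 0}) \<le> emeasure H (UNIV - K)"
    using K(1,2) b sets by (intro emeasure_mono) (force intro!: borel_open open_Diff compact_imp_closed)+
  with K(3) show thesis by (intro that[of "max b 0"]) auto
qed

lemma type_distribution_cdf_le_measure:
  assumes "type_distribution H" "A \<in> sets H" "{0..x} \<subseteq> A"
  shows "cdf H x \<le> measure H A"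
proof -
  interpret real_distribution H using assms(1) by (rule type_distribution_real_distribution)
  obtain b where "emeasure H (UNIV - {0..b}) = 0"
    using assms(1) by (rule type_distribution_support_bounded)
  then have "emeasure H {..<0} = 0"
    by (rule emeasure_eq_0[rotated]) auto
  have "{..x} \<subseteq> A \<union> {..<0}"
    using assms(3) by (auto simp: subset_iff not_less)
  then have "cdf H x \<le> measure H (A \<union> {..<0})"
    unfolding cdf_def using assms(2) by (intro finite_measure_mono) auto
  also have "\<dots> \<le> measure H A + measure H {..<0}"
    using assms(2) by (intro measure_subadditive) auto
  finally show ?thesis using \<open>emeasure H {..<0} = 0\<close> by (simp add: measure_def)
qed

lemma type_distribution_cdf_surj:
  assumes "type_distribution H" "0 \<le> v" "v \<le> 1"
  shows "\<exists>x\<ge>0. cdf H x = v"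
proof -
  interpret real_distribution H using assms(1) by (rule type_distribution_real_distribution)
  obtain b where b: "b \<ge> 0" "emeasure H (UNIV - {0..b}) = 0"
    using assms(1) by (rule type_distribution_support_bounded)
  have "cdf H 0 \<le> measure H {0}"
    using assms(1) by (intro type_distribution_cdf_le_measure) auto
  then have "cdf H 0 \<le> 0"
    using assms(1) by (simp add: type_distribution_def measure_def)
  then have "cdf H 0 = 0"
    using cdf_nonneg[of 0] by linarith
  have "1 = measure H {0..b}"
    using prob_compl[of "{0..b}"] b(2) by (simp add: measure_def)
  also have "\<dots> \<le> cdf H b"
    unfolding cdf_def by (intro finite_measure_mono) auto
  finally have "cdf H 0 \<le> v" "v \<le> cdf H b"
    using assms(2,3) \<open>cdf H 0 = 0\<close> by auto
  moreover have "\<forall>x. 0 \<le> x \<and> x \<le> b \<longrightarrow> isCont (cdf H) x"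
    using assms(1) by (simp add: isCont_cdf emeasure_eq_measure type_distribution_def)
  ultimately show ?thesis using IVT[of "cdf H" 0 v b] b(1) by auto
qed

lemma cdf_eq_sublevel_measure_if_less:
  fixes X Y :: "real \<Rightarrow> real"
  assumes "type_distribution G" "type_distribution F"
    and X_mono: "mono_on {0..} X" and Y_mono: "mono_on {0..} Y"
    and sublevel_sets: "{x. 0 \<le> x \<and> X x \<le> r} \<in> sets G" "{y. 0 \<le> y \<and> Y y \<le> r} \<in> sets F"
    and sublevel_eq: "measure G {x. 0 \<le> x \<and> X x \<le> r} = measure F {y. 0 \<le> y \<and> Y y \<le> r}"
    and "0 \<le> s" "0 \<le> t" "cdf F t = cdf G s" "Y t = r" "r < X s"
  shows "cdf G s = measure G {x. 0 \<le> x \<and> X x \<le> r}"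
proof (rule antisym)
  have "{0..t} \<subseteq> {y. 0 \<le> y \<and> Y y \<le> r}"
    using mono_onD[OF Y_mono] \<open>0 \<le> t\<close> \<open>Y t = r\<close> by auto
  then have "cdf F t \<le> measure F {y. 0 \<le> y \<and> Y y \<le> r}"
    using assms(2) sublevel_sets(2) by (rule type_distribution_cdf_le_measure[rotated 2])
  then show "cdf G s \<le> measure G {x. 0 \<le> x \<and> X x \<le> r}"
    using sublevel_eq \<open>cdf F t = cdf G s\<close> by simp
  interpret real_distribution G using assms(1) by (rule type_distribution_real_distribution)
  have "{x. 0 \<le> x \<and> X x \<le> r} \<subseteq> {..s}"
  proof (rule subsetI, rule ccontr)
    fix x assume "x \<in> {x. 0 \<le> x \<and> X x \<le> r}" "x \<notin> {..s}"
    then show False using mono_onD[OF X_mono, of s x] \<open>0 \<le> s\<close> \<open>r < X s\<close> by auto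
  qed
  then show "measure G {x. 0 \<le> x \<and> X x \<le> r} \<le> cdf G s"
    unfolding cdf_def by (intro finite_measure_mono) auto
qed

lemma market_equilibrium_quantile_matching:
  assumes tG: "type_distribution G" and tF: "type_distribution F"
    and "cost_fun g" "value_fun f" "menu M"
    and eq: "market_equilibrium M G F f g \<Gamma> p D"
  shows "AE \<psi> in G. 0 \<le> \<psi> \<longrightarrow> (\<forall>\<phi>\<ge>0. cdf F \<phi> = cdf G \<psi> \<longrightarrow> D \<phi> = fst (\<Gamma> \<psi>))"
proof -
  interpret G: real_distribution G using tG by (rule type_distribution_real_distribution)
  interpret F: real_distribution F using tF by (rule type_distribution_real_distribution)
  define A where "A r = {\<psi>. 0 \<le> \<psi> \<and> fst (\<Gamma> \<psi>) \<le> r}" for r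
  define N where "N = (\<Union>r\<in>fst ` M. {\<psi>. cdf G \<psi> = measure G (A r)})"
  have null: "N \<in> null_sets G"
    unfolding N_def using assms(5) tG
    by (intro null_sets.finite_UN G.cdf_level_set_null) (auto simp: menu_def type_distribution_def)
  have matched: "D \<phi> = fst (\<Gamma> \<psi>)"
    if "\<psi> \<notin> N" "0 \<le> \<psi>" "0 \<le> \<phi>" "cdf F \<phi> = cdf G \<psi>" for \<psi> \<phi>
  proof (rule ccontr)
    assume "D \<phi> \<noteq> fst (\<Gamma> \<psi>)"
    note sublevel = market_equilibrium_sublevel_measure_eq[OF assms(5) eq G.finite_measure_axioms
        F.finite_measure_axioms]
    note choice_mono = market_equilibrium_certificate_mono[OF assms(3,5) eq]
      market_equilibrium_demand_mono[OF assms(4,5) eq]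
    have "\<exists>r\<in>fst ` M. cdf G \<psi> = measure G (A r)"
    proof (cases "D \<phi> < fst (\<Gamma> \<psi>)")
      case True
      then have "cdf G \<psi> = measure G (A (D \<phi>))"
        unfolding A_def using cdf_eq_sublevel_measure_if_less[OF tG tF choice_mono sublevel] that by auto
      moreover have "D \<phi> \<in> fst ` M" using eq \<open>0 \<le> \<phi>\<close> by (simp add: market_equilibrium_def)
      ultimately show ?thesis by blast
    next
      case False
      with \<open>D \<phi> \<noteq> fst (\<Gamma> \<psi>)\<close> have "fst (\<Gamma> \<psi>) < D \<phi>" by simp
      then have "cdf F \<phi> = measure G (A (fst (\<Gamma> \<psi>)))"
        unfolding A_def using cdf_eq_sublevel_measure_if_less[OF tF tG choice_mono(2,1) sublevel(2,1)
            sublevel(3)[symmetric]] sublevel(3) that by auto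
      moreover have "fst (\<Gamma> \<psi>) \<in> fst ` M" using eq \<open>0 \<le> \<psi>\<close> by (simp add: market_equilibrium_def)
      ultimately show ?thesis using that(4) by (metis (no_types, lifting))
    qed
    with \<open>\<psi> \<notin> N\<close> show False by (auto simp: N_def)
  qed
  from null show ?thesis by (rule AE_I') (use matched in blast)
qed

lemma market_equilibrium_matched_surplus_max:
  assumes eq: "market_equilibrium M G F f g \<Gamma> p D"
    and "0 \<le> \<psi>" "0 \<le> \<phi>" "D \<phi> = fst (\<Gamma> \<psi>)" "(q, t) \<in> M"
  shows "f q \<phi> - g q \<psi> - t \<le> f (fst (\<Gamma> \<psi>)) \<phi> - g (fst (\<Gamma> \<psi>)) \<psi> - snd (\<Gamma> \<psi>)"
proof -
  have "p q - g q \<psi> - t \<le> p (fst (\<Gamma> \<psi>)) - g (fst (\<Gamma> \<psi>)) \<psi> - snd (\<Gamma> \<psi>)"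
    using eq assms(2,5) unfolding market_equilibrium_def by fast
  moreover have "f q \<phi> - p q \<le> f (D \<phi>) \<phi> - p (D \<phi>)"
    using eq assms(3,5) unfolding market_equilibrium_def by force
  ultimately show ?thesis using \<open>D \<phi> = fst (\<Gamma> \<psi>)\<close> by simp
qed

theorem corollary1:
  fixes G F :: "real measure"
    and f g :: "real \<Rightarrow> real \<Rightarrow> real"
    and M :: "(real \<times> real) set"
    and \<Gamma> :: "real \<Rightarrow> real \<times> real"
    and p D :: "real \<Rightarrow> real"
  assumes "type_distribution G" and "type_distribution F"
    and "cost_fun g" and "value_fun f"
    and "menu M"
    and "market_equilibrium M G F f g \<Gamma> p D"
  shows "(\<forall>\<psi>1 \<psi>2. 0 \<le> \<psi>1 \<longrightarrow> \<psi>1 \<le> \<psi>2 \<longrightarrow> fst (\<Gamma> \<psi>1) \<le> fst (\<Gamma> \<psi>2)) \<and>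
         (AE \<psi> in G. 0 \<le> \<psi> \<longrightarrow>
            (\<exists>\<phi>\<ge>0. cdf F \<phi> = cdf G \<psi>) \<and>
            (\<forall>\<phi>\<ge>0. cdf F \<phi> = cdf G \<psi> \<longrightarrow>
               D \<phi> = fst (\<Gamma> \<psi>) \<and> \<Gamma> \<psi> \<in> M \<and>
               (\<forall>(q, t)\<in>M. f q \<phi> - g q \<psi> - t \<le>
                  f (fst (\<Gamma> \<psi>)) \<phi> - g (fst (\<Gamma> \<psi>)) \<psi> - snd (\<Gamma> \<psi>))))"
proof
  show "\<forall>\<psi>1 \<psi>2. 0 \<le> \<psi>1 \<longrightarrow> \<psi>1 \<le> \<psi>2 \<longrightarrow> fst (\<Gamma> \<psi>1) \<le> fst (\<Gamma> \<psi>2)"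
    using mono_onD[OF market_equilibrium_certificate_mono[OF assms(3,5,6)]] by simp
  interpret G: real_distribution G using assms(1) by (rule type_distribution_real_distribution)
  have quantile_exists: "\<exists>\<phi>\<ge>0. cdf F \<phi> = cdf G \<psi>" for \<psi>
    using type_distribution_cdf_surj[OF assms(2)] G.cdf_nonneg G.cdf_bounded_prob by blast
  have "\<Gamma> \<psi> \<in> M" if "0 \<le> \<psi>" for \<psi>
    using assms(6) that by (simp add: market_equilibrium_def)
  with market_equilibrium_quantile_matching[OF assms] quantile_exists
    market_equilibrium_matched_surplus_max[OF assms(6)]
  show "AE \<psi> in G. 0 \<le> \<psi> \<longrightarrow>
            (\<exists>\<phi>\<ge>0. cdf F \<phi> = cdf G \<psi>) \<and>
            (\<forall>\<phi>\<ge>0. cdf F \<phi> = cdf G \<psi> \<longrightarrow>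
               D \<phi> = fst (\<Gamma> \<psi>) \<and> \<Gamma> \<psi> \<in> M \<and>
               (\<forall>(q, t)\<in>M. f q \<phi> - g q \<psi> - t \<le>
                  f (fst (\<Gamma> \<psi>)) \<phi> - g (fst (\<Gamma> \<psi>)) \<psi> - snd (\<Gamma> \<psi>)))"
    by (auto elim!: AE_mp)
qed

end
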